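(* Fix $d \geq 2$. If $c > (d+1)/2$ and $Y \sim Y_d(n, \frac{c\log n}{n})$, then with high probability $Y$ does not contain two isolated $(d-1)$-faces that share a common $(d-2)$-face.
   Context: $Y_d(n,p)$ is the random $d$-dimensional simplicial complex on $n$ vertices with complete $(d-1)$-skeleton in which each $d$-face is included independently with probability $p$. "With high probability" means with probability tending to $1$ as $n\to\infty$. A $(d-1)$-face is isolated if it is contained in no $d$-face of $Y$. *)

theory Defs
  imports "HOL-Probability.Probability"
begin

definition faces :: "nat \<Rightarrow> nat \<Rightarrow> nat set set" where
  "faces n k = {F. F \<subseteq> {0..<n} \<and> card F = k + 1}"

text \<open>Y_d(n,p): complete (d-1)-skeleton, each d-face included independently with
  probability p. The complex is represented by its set of d-faces (the lower skeleton
  is complete, hence determined).\<close>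
definition Y_pmf :: "nat \<Rightarrow> nat \<Rightarrow> real \<Rightarrow> nat set set pmf" where
  "Y_pmf d n p =
     map_pmf (\<lambda>f. {F \<in> faces n d. f F}) (Pi_pmf (faces n d) False (\<lambda>_. bernoulli_pmf p))"

definition isolated_face :: "nat \<Rightarrow> nat \<Rightarrow> nat set set \<Rightarrow> nat set \<Rightarrow> bool" where
  "isolated_face d n Y \<sigma> \<longleftrightarrow> \<sigma> \<in> faces n (d - 1) \<and> (\<forall>F\<in>Y. \<not> \<sigma> \<subseteq> F)"

definition two_adjacent_isolated :: "nat \<Rightarrow> nat \<Rightarrow> nat set set \<Rightarrow> bool" where
  "two_adjacent_isolated d n Y \<longleftrightarrow>
     (\<exists>\<sigma> \<tau> \<rho>. \<sigma> \<noteq> \<tau> \<and> isolated_face d n Y \<sigma> \<and> isolated_face d n Y \<tau> \<and>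
        \<rho> \<in> faces n (d - 2) \<and> \<rho> \<subseteq> \<sigma> \<and> \<rho> \<subseteq> \<tau>)"

end

theory Submission imports Defs "HOL-Real_Asymp.Real_Asymp" begin

(* Each (d-1)-face has n - d cofaces, and two distinct (d-1)-faces share at most one of them,
   their union.  Hence both are isolated only if at least 2(n - d) - 1 independent d-faces are
   missing, which has probability (1 - p)^(2(n-d)-1) = n^(-2c + o(1)).  Adjacency is needed only
   for counting: an adjacent pair is determined by the first face, a vertex to remove and a
   vertex to add, so there are at most d n^(d+1) pairs, and the union bound gives
   d n^(d+1-2c+o(1)) -> 0 because 2c > d + 1. *)

lemma finite_faces: "finite (faces n k)"
  by (rule finite_subset[of _ "Pow {0..<n}"]) (auto simp: faces_def)

lemma card_faces: "card (faces n k) = n choose (k + 1)"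
  using n_subsets[of "{0..<n}" "k + 1"] by (simp add: faces_def)

lemma finite_face: "\<sigma> \<in> faces n k \<Longrightarrow> finite \<sigma>"
  by (auto simp: faces_def intro: finite_subset)

definition cofaces :: "nat \<Rightarrow> nat \<Rightarrow> nat set \<Rightarrow> nat set set" where
  "cofaces n k \<sigma> = {F \<in> faces n k. \<sigma> \<subseteq> F}"

lemma cofaces_eq_image_insert:
  assumes "\<sigma> \<in> faces n k"
  shows "cofaces n (Suc k) \<sigma> = (\<lambda>v. insert v \<sigma>) ` ({0..<n} - \<sigma>)"
proof -
  have \<sigma>: "\<sigma> \<subseteq> {0..<n}" "finite \<sigma>" "card \<sigma> = Suc k"
    using assms finite_face[OF assms] by (simp_all add: faces_def)
  have "F \<in> (\<lambda>v. insert v \<sigma>) ` ({0..<n} - \<sigma>)" if "F \<in> cofaces n (Suc k) \<sigma>" for F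
  proof -
    have F: "F \<subseteq> {0..<n}" "card F = Suc (Suc k)" "\<sigma> \<subseteq> F"
      using that by (simp_all add: cofaces_def faces_def)
    then have "card (F - \<sigma>) = 1"
      using \<sigma> card_Diff_subset[of \<sigma> F] by simp
    then obtain v where "F - \<sigma> = {v}" by (rule card_1_singletonE)
    then have "F = insert v \<sigma>" "v \<in> {0..<n} - \<sigma>" using F by auto
    then show ?thesis by blast
  qed
  moreover have "insert v \<sigma> \<in> cofaces n (Suc k) \<sigma>" if "v \<in> {0..<n} - \<sigma>" for v
    using that \<sigma> by (auto simp: cofaces_def faces_def)
  ultimately show ?thesis by blast
qed

lemma card_cofaces:
  assumes "\<sigma> \<in> faces n k"
  shows "card (cofaces n (Suc k) \<sigma>) = n - Suc k"
proof -
  have "inj_on (\<lambda>v. insert v \<sigma>) ({0..<n} - \<sigma>)"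
    by (auto simp: inj_on_def)
  moreover have "card ({0..<n} - \<sigma>) = n - Suc k"
    using assms finite_face[OF assms] by (simp add: faces_def card_Diff_subset)
  ultimately show ?thesis
    by (simp add: cofaces_eq_image_insert[OF assms] card_image)
qed

text \<open>A common coface contains \<open>\<sigma> \<union> \<tau>\<close>, which already has \<open>k + 2\<close> elements.\<close>
lemma cofaces_Int_subset:
  assumes "\<sigma> \<noteq> \<tau>" "\<sigma> \<in> faces n k" "\<tau> \<in> faces n k"
  shows "cofaces n (Suc k) \<sigma> \<inter> cofaces n (Suc k) \<tau> \<subseteq> {\<sigma> \<union> \<tau>}"
proof
  fix F assume "F \<in> cofaces n (Suc k) \<sigma> \<inter> cofaces n (Suc k) \<tau>"
  then have F: "F \<subseteq> {0..<n}" "card F = k + 2" "\<sigma> \<union> \<tau> \<subseteq> F"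
    by (auto simp: cofaces_def faces_def)
  have "finite F" by (rule finite_subset[OF F(1)]) simp
  have \<sigma>: "finite \<sigma>" "card \<sigma> = k + 1" and \<tau>: "finite \<tau>" "card \<tau> = k + 1"
    using assms(2,3) finite_face[OF assms(2)] finite_face[OF assms(3)] by (simp_all add: faces_def)
  have "\<not> \<tau> \<subseteq> \<sigma>"
    using assms(1) \<sigma> \<tau> card_subset_eq[of \<sigma> \<tau>] by auto
  then have "card \<sigma> < card (\<sigma> \<union> \<tau>)"
    using \<sigma> \<tau> by (intro psubset_card_mono) auto
  moreover have "card (\<sigma> \<union> \<tau>) \<le> card F" using F(3) \<open>finite F\<close> by (rule card_mono[rotated])
  ultimately have "card (\<sigma> \<union> \<tau>) = card F" using \<sigma> F(2) by linarith
  then show "F \<in> {\<sigma> \<union> \<tau>}" using card_subset_eq[OF \<open>finite F\<close> F(3)] by simp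
qed

lemma card_cofaces_Un_ge:
  assumes "\<sigma> \<noteq> \<tau>" "\<sigma> \<in> faces n k" "\<tau> \<in> faces n k"
  shows "2 * (n - Suc k) - 1 \<le> card (cofaces n (Suc k) \<sigma> \<union> cofaces n (Suc k) \<tau>)"
proof -
  have fin: "finite (cofaces n (Suc k) \<rho>)" for \<rho>
    using finite_faces by (simp add: cofaces_def)
  have "card (cofaces n (Suc k) \<sigma> \<inter> cofaces n (Suc k) \<tau>) \<le> 1"
    using card_mono[OF _ cofaces_Int_subset[OF assms]] by simp
  then show ?thesis
    using card_Un_Int[OF fin fin, of \<sigma> \<tau>] card_cofaces[OF assms(2)] card_cofaces[OF assms(3)]
    by linarith
qed

lemma prob_Y_pmf_absent:
  assumes "S \<subseteq> faces n d" "0 \<le> p" "p \<le> 1"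
  shows "measure_pmf.prob (Y_pmf d n p) {Y. S \<inter> Y = {}} = (1 - p) ^ card S"
proof -
  define B where "B F = (if F \<in> S then {False} else UNIV)" for F :: "nat set"
  have "(\<lambda>f. {F \<in> faces n d. f F}) -` {Y. S \<inter> Y = {}} = Pi (faces n d) B"
    using assms(1) by (auto simp: B_def Pi_def)
  then have "measure_pmf.prob (Y_pmf d n p) {Y. S \<inter> Y = {}}
      = measure_pmf.prob (Pi_pmf (faces n d) False (\<lambda>_. bernoulli_pmf p)) (Pi (faces n d) B)"
    by (simp add: Y_pmf_def measure_map_pmf)
  also have "\<dots> = (\<Prod>F\<in>faces n d. measure_pmf.prob (bernoulli_pmf p) (B F))"
    by (rule measure_Pi_pmf_Pi[OF finite_faces])
  also have "\<dots> = (\<Prod>F\<in>faces n d. if F \<in> S then 1 - p else 1)"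
    by (intro prod.cong) (auto simp: B_def measure_pmf_single assms(2,3))
  also have "\<dots> = (1 - p) ^ card S"
    using assms(1) finite_faces[of n d] by (simp add: prod.If_cases Int_absorb1)
  finally show ?thesis .
qed

lemma prob_isolated_pair_le:
  assumes "d \<ge> 1" "\<sigma> \<noteq> \<tau>" "0 \<le> p" "p \<le> 1"
  shows "measure_pmf.prob (Y_pmf d n p) {Y. isolated_face d n Y \<sigma> \<and> isolated_face d n Y \<tau>}
           \<le> (1 - p) ^ (2 * (n - d) - 1)"
proof (cases "\<sigma> \<in> faces n (d - 1) \<and> \<tau> \<in> faces n (d - 1)")
  case False
  then have "{Y. isolated_face d n Y \<sigma> \<and> isolated_face d n Y \<tau>} = {}"
    by (auto simp: isolated_face_def)
  then show ?thesis using assms(3,4) by (metis measure_empty diff_ge_0_iff_ge zero_le_power)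
next
  case True
  define S where "S = cofaces n d \<sigma> \<union> cofaces n d \<tau>"
  have "Suc (d - 1) = d" using assms(1) by simp
  then have cardS: "2 * (n - d) - 1 \<le> card S"
    using card_cofaces_Un_ge[OF assms(2), of n "d - 1"] True by (simp add: S_def)
  have "S \<subseteq> faces n d" by (auto simp: S_def cofaces_def)
  have "measure_pmf.prob (Y_pmf d n p) {Y. isolated_face d n Y \<sigma> \<and> isolated_face d n Y \<tau>}
      \<le> measure_pmf.prob (Y_pmf d n p) {Y. S \<inter> Y = {}}"
    by (intro measure_pmf.finite_measure_mono) (auto simp: S_def cofaces_def isolated_face_def)
  also have "\<dots> = (1 - p) ^ card S"
    by (rule prob_Y_pmf_absent) fact+
  also have "\<dots> \<le> (1 - p) ^ (2 * (n - d) - 1)"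
    using assms(3,4) cardS by (intro power_decreasing) auto
  finally show ?thesis .
qed

definition adjacent_faces :: "nat \<Rightarrow> nat \<Rightarrow> (nat set \<times> nat set) set" where
  "adjacent_faces d n = {(\<sigma>, \<tau>). \<sigma> \<noteq> \<tau> \<and> \<sigma> \<in> faces n (d - 1) \<and> \<tau> \<in> faces n (d - 1) \<and>
     (\<exists>\<rho>\<in>faces n (d - 2). \<rho> \<subseteq> \<sigma> \<and> \<rho> \<subseteq> \<tau>)}"

lemma two_adjacent_isolated_subset:
  "{Y. two_adjacent_isolated d n Y}
     \<subseteq> (\<Union>(\<sigma>, \<tau>)\<in>adjacent_faces d n. {Y. isolated_face d n Y \<sigma> \<and> isolated_face d n Y \<tau>})"
proof
  fix Y assume "Y \<in> {Y. two_adjacent_isolated d n Y}"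
  then obtain \<sigma> \<tau> where "(\<sigma>, \<tau>) \<in> adjacent_faces d n"
    and "isolated_face d n Y \<sigma>" "isolated_face d n Y \<tau>"
    unfolding two_adjacent_isolated_def adjacent_faces_def isolated_face_def by blast
  then show "Y \<in> (\<Union>(\<sigma>, \<tau>)\<in>adjacent_faces d n. {Y. isolated_face d n Y \<sigma> \<and> isolated_face d n Y \<tau>})"
    by blast
qed

lemma adjacent_faces_subset_image:
  assumes "d \<ge> 2"
  shows "adjacent_faces d n
           \<subseteq> (\<lambda>(\<sigma>, u, w). (\<sigma>, insert w (\<sigma> - {u}))) ` (SIGMA \<sigma>:faces n (d - 1). \<sigma> \<times> {0..<n})"
proof
  fix \<sigma>\<tau> assume "\<sigma>\<tau> \<in> adjacent_faces d n"
  then obtain \<sigma> \<tau> \<rho> where \<sigma>\<tau>: "\<sigma>\<tau> = (\<sigma>, \<tau>)" and faces: "\<sigma> \<in> faces n (d - 1)" "\<tau> \<in> faces n (d - 1)"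
    and \<rho>: "\<rho> \<in> faces n (d - 2)" "\<rho> \<subseteq> \<sigma>" "\<rho> \<subseteq> \<tau>"
    by (auto simp: adjacent_faces_def)
  have extra_vertex: "\<exists>v. \<alpha> = insert v \<rho> \<and> v \<notin> \<rho>" if "\<alpha> \<in> faces n (d - 1)" "\<rho> \<subseteq> \<alpha>" for \<alpha>
  proof -
    have "card (\<alpha> - \<rho>) = 1"
      using that \<rho>(1) assms finite_face[OF \<rho>(1)] by (simp add: faces_def card_Diff_subset)
    then obtain v where "\<alpha> - \<rho> = {v}" by (rule card_1_singletonE)
    then show ?thesis using that(2) by blast
  qed
  obtain u w where u: "\<sigma> = insert u \<rho>" "u \<notin> \<rho>" and w: "\<tau> = insert w \<rho>"
    using extra_vertex[OF faces(1) \<rho>(2)] extra_vertex[OF faces(2) \<rho>(3)] by blast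
  have "\<tau> = insert w (\<sigma> - {u})" "w < n" using u w faces(2) by (auto simp: faces_def)
  then show "\<sigma>\<tau> \<in> (\<lambda>(\<sigma>, u, w). (\<sigma>, insert w (\<sigma> - {u}))) ` (SIGMA \<sigma>:faces n (d - 1). \<sigma> \<times> {0..<n})"
    using \<sigma>\<tau> faces(1) u by (intro image_eqI[of _ _ "(\<sigma>, u, w)"]) auto
qed

lemma card_adjacent_faces_le:
  assumes "d \<ge> 2"
  shows "card (adjacent_faces d n) \<le> d * n ^ (d + 1)"
proof -
  define T where "T = (SIGMA \<sigma>:faces n (d - 1). \<sigma> \<times> {0..<n})"
  have "finite T" unfolding T_def by (auto intro: finite_faces dest: finite_face)
  have "card (adjacent_faces d n) \<le> card ((\<lambda>(\<sigma>, u, w). (\<sigma>, insert w (\<sigma> - {u}))) ` T)"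
    unfolding T_def using \<open>finite T\<close> adjacent_faces_subset_image[OF assms]
    by (intro card_mono finite_imageI) (simp_all add: T_def)
  also have "\<dots> \<le> card T"
    by (rule card_image_le[OF \<open>finite T\<close>])
  also have "\<dots> = (\<Sum>\<sigma>\<in>faces n (d - 1). card (\<sigma> \<times> {0..<n}))"
    unfolding T_def by (rule card_SigmaI[OF finite_faces]) (auto dest: finite_face)
  also have "\<dots> = (\<Sum>\<sigma>\<in>faces n (d - 1). d * n)"
    using assms by (intro sum.cong) (auto simp: faces_def card_cartesian_product)
  also have "\<dots> = (n choose d) * (d * n)"
    using assms by (simp add: card_faces)
  also have "\<dots> \<le> n ^ d * (d * n)"
    by (cases "d \<le> n") (auto simp: binomial_le_pow binomial_eq_0)
  finally show ?thesis by (simp add: algebra_simps)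
qed

lemma prob_two_adjacent_isolated_le:
  assumes "d \<ge> 2" "0 \<le> p" "p \<le> 1"
  shows "measure_pmf.prob (Y_pmf d n p) {Y. two_adjacent_isolated d n Y}
           \<le> real d * real n ^ (d + 1) * (1 - p) ^ (2 * (n - d) - 1)"
proof -
  have fin: "finite (adjacent_faces d n)"
    by (rule finite_subset[of _ "faces n (d - 1) \<times> faces n (d - 1)"])
       (auto simp: adjacent_faces_def finite_faces)
  have "measure_pmf.prob (Y_pmf d n p) {Y. two_adjacent_isolated d n Y}
      \<le> measure_pmf.prob (Y_pmf d n p)
           (\<Union>(\<sigma>, \<tau>)\<in>adjacent_faces d n. {Y. isolated_face d n Y \<sigma> \<and> isolated_face d n Y \<tau>})"
    by (rule measure_pmf.finite_measure_mono[OF two_adjacent_isolated_subset]) simp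
  also have "\<dots> \<le> (\<Sum>(\<sigma>, \<tau>)\<in>adjacent_faces d n.
           measure_pmf.prob (Y_pmf d n p) {Y. isolated_face d n Y \<sigma> \<and> isolated_face d n Y \<tau>})"
    using measure_pmf.finite_measure_subadditive_finite[OF fin,
        of "\<lambda>(\<sigma>, \<tau>). {Y. isolated_face d n Y \<sigma> \<and> isolated_face d n Y \<tau>}"]
    by (simp add: prod.case_distrib)
  also have "\<dots> \<le> (\<Sum>_\<in>adjacent_faces d n. (1 - p) ^ (2 * (n - d) - 1))"
  proof (rule sum_mono, clarify)
    fix \<sigma> \<tau> assume "(\<sigma>, \<tau>) \<in> adjacent_faces d n"
    then show "measure_pmf.prob (Y_pmf d n p) {Y. isolated_face d n Y \<sigma> \<and> isolated_face d n Y \<tau>}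
        \<le> (1 - p) ^ (2 * (n - d) - 1)"
      using assms by (intro prob_isolated_pair_le) (simp_all add: adjacent_faces_def)
  qed
  also have "\<dots> = real (card (adjacent_faces d n)) * (1 - p) ^ (2 * (n - d) - 1)"
    by simp
  also have "\<dots> \<le> real d * real n ^ (d + 1) * (1 - p) ^ (2 * (n - d) - 1)"
  proof (rule mult_right_mono)
    show "real (card (adjacent_faces d n)) \<le> real d * real n ^ (d + 1)"
      using card_adjacent_faces_le[OF assms(1), of n] by (metis of_nat_le_iff of_nat_mult of_nat_power)
  qed (use assms(3) in simp)
  finally show ?thesis .
qed

lemma one_minus_power_le_exp:
  fixes x :: real
  assumes "x \<le> 1"
  shows "(1 - x) ^ m \<le> exp (- x * real m)"
proof -
  have "(1 - x) ^ m \<le> exp (- x) ^ m"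
    using assms exp_minus_ge by (intro power_mono) auto
  also have "\<dots> = exp (- x * real m)"
    by (simp add: exp_of_nat_mult[symmetric] mult.commute)
  finally show ?thesis .
qed

lemma prob_two_adjacent_isolated_le_exp:
  assumes "d \<ge> 2" "0 \<le> p" "p \<le> 1" "d < n"
  shows "measure_pmf.prob (Y_pmf d n p) {Y. two_adjacent_isolated d n Y}
           \<le> real d * real n ^ (d + 1) * exp (- p * (2 * (real n - real d) - 1))"
proof -
  have "real (2 * (n - d) - 1) = 2 * (real n - real d) - 1" using assms(4) by (simp add: of_nat_diff)
  then have exp_bound: "(1 - p) ^ (2 * (n - d) - 1) \<le> exp (- p * (2 * (real n - real d) - 1))"
    by (metis one_minus_power_le_exp[OF assms(3)])
  have "measure_pmf.prob (Y_pmf d n p) {Y. two_adjacent_isolated d n Y}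
      \<le> real d * real n ^ (d + 1) * (1 - p) ^ (2 * (n - d) - 1)"
    by (rule prob_two_adjacent_isolated_le[OF assms(1-3)])
  also have "\<dots> \<le> real d * real n ^ (d + 1) * exp (- p * (2 * (real n - real d) - 1))"
    by (rule mult_left_mono[OF exp_bound]) simp
  finally show ?thesis .
qed

theorem lemma5:
  fixes d :: nat and c :: real
  assumes "d \<ge> 2" and "c > (real d + 1) / 2"
  shows "(\<lambda>n. measure_pmf.prob (Y_pmf d n (c * ln (real n) / real n))
                 {Y. two_adjacent_isolated d n Y}) \<longlonglongrightarrow> 0"
proof -
  define p where "p n = c * ln (real n) / real n" for n :: nat
  define bound where
    "bound n = real d * real n ^ (d + 1) * exp (- p n * (2 * (real n - real d) - 1))" for n :: nat
  have "0 < (real d + 1) / 2" by simp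
  with assms(2) have "c > 0" by linarith
  have bound_lim: "bound \<longlonglongrightarrow> 0"
    using assms(2) unfolding bound_def p_def by real_asymp
  have "eventually (\<lambda>n. p n \<le> 1) sequentially"
    unfolding p_def by real_asymp
  then have bound_ge: "eventually (\<lambda>n.
      measure_pmf.prob (Y_pmf d n (p n)) {Y. two_adjacent_isolated d n Y} \<le> bound n) sequentially"
    using eventually_gt_at_top[of d]
  proof eventually_elim
    case (elim n)
    have "0 \<le> ln (real n)" using elim(2) by simp
    with \<open>c > 0\<close> have "0 \<le> p n" by (simp add: p_def)
    then show ?case
      unfolding bound_def by (rule prob_two_adjacent_isolated_le_exp[OF assms(1) _ elim])
  qed
  have "(\<lambda>n. measure_pmf.prob (Y_pmf d n (p n)) {Y. two_adjacent_isolated d n Y}) \<longlonglongrightarrow> 0"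
    by (rule tendsto_sandwich[OF always_eventually bound_ge tendsto_const bound_lim]) simp
  then show ?thesis by (simp add: p_def)
qed

end
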